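(* Let $x=(x_0x_1)^{-1}$ and $y=x_2xx_2^{-1}$. Then for all $j\ge0$: $x^{2^{2j+1}}=M_{2^{2j+1}-1}([51,89,196],[0,0,0],\dots)$, $y^{2^{2j+1}}=M_{2^{2j+1}-1}([51,89,196],[0,157,106],\dots)$, $x^{2^{2j+2}}=M_{2^{2j+2}-1}([28,235,129],[0,0,0],\dots)$, $y^{2^{2j+2}}=M_{2^{2j+2}-1}([28,235,129],[39,208,186],\dots)$.
   Context: Consider infinite upper unitriangular block matrices $X=(X_{r,s})_{r,s\ge1}$ whose entries are $3\times3$ matrices over $\mathbb F_2$, with $X_{r,r}=I$, $X_{r,s}=0$ for $s<r$, and whose upper diagonals are $3$-periodic: for each $j\ge1$ there are $a_{j1},a_{j2},a_{j3}\in M(3,\mathbb F_2)$ with $X_{r,r+j}=a_{j,i}$, where $i\in\{1,2,3\}$, $i\equiv r\pmod 3$; $a_j=[a_{j1},a_{j2},a_{j3}]$ is the $j$-th upper diagonal. For $l\ge0$, $M_l(c_1,c_2,\dots)$ denotes such a matrix whose first $l$ upper diagonals are zero and whose $(l+1)$-st, $(l+2)$-nd, $\dots$ upper diagonals are $c_1,c_2,\dots$; diagonals hidden in "$\dots$" are unspecified, while a matrix written $M_0(c_1,\dots,c_m)$ without dots has all further diagonals zero. A matrix $u=(u_{pq})\in M(3,\mathbb F_2)$ is encoded by the integer $256u_{11}+128u_{12}+64u_{13}+32u_{21}+16u_{22}+8u_{23}+4u_{31}+2u_{32}+u_{33}$, and a diagonal by the triple of integers of its three blocks. The elements are $x_0=M_0([11,11,11],[17,17,17],[26,26,26],[11,11,0],[17,0,0])$,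 $x_1=M_0([23,224,138],[59,136,495],[26,488,227],[23,224,0],[59,0,0])$, $x_2=M_0([46,68,217],[12,194,363],[26,326,77],[46,68,0],[12,0,0])$. *)

theory Defs
  imports "HOL-Analysis.Analysis" "HOL-Library.Z2"
begin

text \<open>Blocks: 3x3 matrices over the field F2 (type bit).  Infinite block
matrices are indexed by rows/columns 0,1,2,...  (row r here is row r+1 of the paper).\<close>

type_synonym blk = "bit ^ 3 ^ 3"
type_synonym imat = "nat \<Rightarrow> nat \<Rightarrow> blk"

definition idx3 :: "3 \<Rightarrow> nat" where
  "idx3 p = (if p = 0 then 0 else if p = 1 then 1 else 2)"

text \<open>Decoding of the integer code 256u11+128u12+...+u33 of a block.\<close>
definition decode :: "nat \<Rightarrow> blk" where
  "decode n = (\<chi> p q. if odd (n div 2 ^ (8 - (3 * idx3 p + idx3 q))) then 1 else 0)"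

definition imul :: "imat \<Rightarrow> imat \<Rightarrow> imat" where
  "imul X Y r s = (\<Sum>t\<in>{r..s}. X r t ** Y t s)"

definition iid :: imat where
  "iid r s = (if r = s then mat 1 else 0)"

definition UT :: "imat set" where
  "UT = {X. \<forall>r. X r r = mat 1 \<and> (\<forall>s<r. X r s = 0)}"

text \<open>Upper diagonals are 3-periodic (a j (r mod 3) is the block a_{j,i}, i = r+1 mod 3 in 1-based indexing).\<close>
definition periodic3 :: "imat \<Rightarrow> bool" where
  "periodic3 X = (\<forall>j\<ge>1. \<exists>a :: nat \<Rightarrow> blk. \<forall>r. X r (r + j) = a (r mod 3))"

definition G :: "imat set" where
  "G = {X \<in> UT. periodic3 X}"

primrec ipow :: "imat \<Rightarrow> nat \<Rightarrow> imat" where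
  "ipow X 0 = iid"
| "ipow X (Suc n) = imul (ipow X n) X"

definition iinv :: "imat \<Rightarrow> imat" where
  "iinv X = (THE Y. Y \<in> UT \<and> imul X Y = iid \<and> imul Y X = iid)"

text \<open>M_0(c_1,...,c_m) with all further diagonals zero; each c_j is a list of three codes.\<close>
definition M0 :: "nat list list \<Rightarrow> imat" where
  "M0 ds r s = (if s < r then 0 else if s = r then mat 1
      else if s - r \<le> length ds then decode ((ds ! (s - r - 1)) ! (r mod 3)) else 0)"

text \<open>X is of the form M_l(c_1,...,c_m,...): an element of G whose first l upper
  diagonals vanish and whose (l+k)-th upper diagonal is c_k for k = 1..m.\<close>
definition has_form :: "nat \<Rightarrow> nat list list \<Rightarrow> imat \<Rightarrow> bool" where
  "has_form l cs X \<longleftrightarrow> X \<in> G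
     \<and> (\<forall>j. 1 \<le> j \<and> j \<le> l \<longrightarrow> (\<forall>r. X r (r + j) = 0))
     \<and> (\<forall>k < length cs. \<forall>r. X r (r + l + k + 1) = decode ((cs ! k) ! (r mod 3)))"

definition x0 :: imat where
  "x0 = M0 [[11,11,11],[17,17,17],[26,26,26],[11,11,0],[17,0,0]]"
definition x1 :: imat where
  "x1 = M0 [[23,224,138],[59,136,495],[26,488,227],[23,224,0],[59,0,0]]"
definition x2 :: imat where
  "x2 = M0 [[46,68,217],[12,194,363],[26,326,77],[46,68,0],[12,0,0]]"

definition xx :: imat where "xx = iinv (imul x0 x1)"
definition yy :: imat where "yy = imul (imul x2 xx) (iinv x2)"

end

theory Submission
  imports Defs
begin

text \<open>Over \<open>\<bbbF>\<^sub>2\<close>, if the first \<open>L - 1\<close> upper diagonals of a unitriangular matrix \<open>X\<close>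
  vanish, then so do the first \<open>2L - 1\<close> upper diagonals of \<open>X\<^sup>2\<close>: the two terms through the main
  diagonal cancel, and in \<open>(X\<^sup>2)\<^sub>r\<^sub>,\<^sub>r\<^sub>+\<^sub>k\<close> only products of entries at distance at least \<open>L\<close>
  from the diagonal survive. So the two leading diagonals of \<open>X\<^sup>2\<close> are products of those of \<open>X\<close>,
  shifted by \<open>L\<close>, and by 3-periodicity only \<open>L mod 3\<close> matters. Once the first two diagonals of
  \<open>x\<close> and \<open>y\<close> are computed, repeated squaring therefore runs through a cycle of length two on
  the codes of the leading diagonals, because \<open>2\<^sup>n mod 3\<close> alternates between \<open>2\<close> and \<open>1\<close>.\<close>

lemma matrix_add_rdistrib:
  fixes A B :: "'a::semiring_1^'n^'m" and C :: "'a^'p^'n"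
  shows "(A + B) ** C = A ** C + B ** C"
  by (vector matrix_matrix_mult_def sum.distrib[symmetric] distrib_right)

lemma matrix_mult_sum_left:
  fixes f :: "'i \<Rightarrow> 'a::semiring_1^'n^'m" and B :: "'a^'p^'n"
  shows "(\<Sum>i\<in>S. f i) ** B = (\<Sum>i\<in>S. f i ** B)"
  by (induction S rule: infinite_finite_induct) (simp_all add: matrix_add_rdistrib)

lemma matrix_mult_sum_right:
  fixes f :: "'i \<Rightarrow> 'a::semiring_1^'p^'n" and B :: "'a^'n^'m"
  shows "B ** (\<Sum>i\<in>S. f i) = (\<Sum>i\<in>S. B ** f i)"
  by (induction S rule: infinite_finite_induct) (simp_all add: matrix_add_ldistrib)

lemma blk_uminus [simp]: "- (A::blk) = A"
  by (simp add: vec_eq_iff)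

lemma blk_add_self [simp]: "(A::blk) + A = 0"
  using ab_left_minus[of A] by simp

lemma blk_add_eq_0_iff: "(A::blk) + B = 0 \<longleftrightarrow> A = B"
  by (metis blk_add_self add_right_cancel)

section \<open>Infinite upper unitriangular block matrices\<close>

lemma imul_assoc: "imul (imul X Y) Z = imul X (imul Y Z)"
proof (intro ext)
  fix r s
  have "imul (imul X Y) Z r s = (\<Sum>t\<in>{r..s}. \<Sum>u\<in>{r..t}. X r u ** Y u t ** Z t s)"
    unfolding imul_def by (simp add: matrix_mult_sum_left)
  also have "\<dots> = (\<Sum>t\<in>{r..s}. \<Sum>u\<in>{u\<in>{r..s}. u \<le> t}. X r u ** Y u t ** Z t s)"
    by (rule sum.cong) (auto intro!: sum.cong)
  also have "\<dots> = (\<Sum>u\<in>{r..s}. \<Sum>t\<in>{t\<in>{r..s}. u \<le> t}. X r u ** Y u t ** Z t s)"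
    by (rule sum.swap_restrict) auto
  also have "\<dots> = (\<Sum>u\<in>{r..s}. \<Sum>t\<in>{u..s}. X r u ** (Y u t ** Z t s))"
    by (rule sum.cong) (auto intro!: sum.cong simp: matrix_mul_assoc)
  also have "\<dots> = imul X (imul Y Z) r s"
    unfolding imul_def by (simp add: matrix_mult_sum_right)
  finally show "imul (imul X Y) Z r s = imul X (imul Y Z) r s" .
qed

lemma imul_iid_left:
  assumes "X \<in> UT" shows "imul iid X = X"
proof (intro ext)
  fix r s
  have "imul iid X r s = (\<Sum>t\<in>{r..s}. if t = r then X r s else 0)"
    unfolding imul_def iid_def by (rule sum.cong) auto
  then show "imul iid X r s = X r s"
    using assms by (auto simp: UT_def)
qed

lemma imul_iid_right:
  assumes "X \<in> UT" shows "imul X iid = X"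
proof (intro ext)
  fix r s
  have "imul X iid r s = (\<Sum>t\<in>{r..s}. if t = s then X r s else 0)"
    unfolding imul_def iid_def by (rule sum.cong) auto
  then show "imul X iid r s = X r s"
    using assms by (auto simp: UT_def)
qed

lemma iid_UT: "iid \<in> UT"
  by (simp add: UT_def iid_def)

lemma imul_UT: "X \<in> UT \<Longrightarrow> Y \<in> UT \<Longrightarrow> imul X Y \<in> UT"
  by (simp add: UT_def imul_def)

lemma ipow_UT: "X \<in> UT \<Longrightarrow> ipow X n \<in> UT"
  by (induction n) (simp_all add: iid_UT imul_UT)

lemma ipow_1: "X \<in> UT \<Longrightarrow> ipow X 1 = X"
  by (simp add: imul_iid_left)

lemma ipow_add: "X \<in> UT \<Longrightarrow> ipow X (m + n) = imul (ipow X m) (ipow X n)"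
  by (induction n) (simp_all add: imul_iid_right ipow_UT imul_assoc)

lemma ipow_mult2: "X \<in> UT \<Longrightarrow> ipow X (2 * n) = imul (ipow X n) (ipow X n)"
  using ipow_add[of X n n] by (simp add: mult_2)

definition ishift :: "nat \<Rightarrow> imat \<Rightarrow> imat" where
  "ishift k X r s = X (r + k) (s + k)"

lemma ishift_invariant_iterate:
  assumes "ishift k X = X" shows "X (r + k * n) (s + k * n) = X r s"
proof (induction n)
  case (Suc n)
  have "X (r + k * Suc n) (s + k * Suc n) = ishift k X (r + k * n) (s + k * n)"
    by (simp add: ishift_def add_ac)
  with Suc assms show ?case by simp
qed simp

lemma G_iff_ishift: "X \<in> G \<longleftrightarrow> X \<in> UT \<and> ishift 3 X = X"
proof
  assume "X \<in> G"
  then have UT: "X \<in> UT" and per: "periodic3 X" by (auto simp: G_def)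
  have "ishift 3 X r s = X r s" for r s
  proof (cases "r < s")
    case True
    then obtain j where j: "s = r + j" "j \<ge> 1" by (metis less_imp_add_positive less_eq_Suc_le One_nat_def)
    obtain a where "\<forall>r. X r (r + j) = a (r mod 3)" using per j(2) unfolding periodic3_def by blast
    then have "X (r + 3) (r + 3 + j) = X r (r + j)" by simp
    then show ?thesis by (simp add: ishift_def j add_ac)
  next
    case False
    then show ?thesis using UT by (cases "r = s") (auto simp: UT_def ishift_def)
  qed
  then show "X \<in> UT \<and> ishift 3 X = X" using UT by auto
next
  assume X: "X \<in> UT \<and> ishift 3 X = X"
  have "\<exists>a. \<forall>r. X r (r + j) = a (r mod 3)" for j
  proof
    show "\<forall>r. X r (r + j) = X (r mod 3) (r mod 3 + j)"
      using ishift_invariant_iterate[of 3 X "r mod 3" "r div 3" "r mod 3 + j" for r] X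
      by (simp add: add_ac)
  qed
  then have "periodic3 X" unfolding periodic3_def by blast
  then show "X \<in> G" using X by (simp add: G_def)
qed

lemma ishift_imul: "ishift k (imul X Y) = imul (ishift k X) (ishift k Y)"
proof (intro ext)
  fix r s
  have "ishift k (imul X Y) r s = (\<Sum>t\<in>{r+k..s+k}. X (r+k) t ** Y t (s+k))"
    by (simp add: ishift_def imul_def)
  also have "\<dots> = (\<Sum>t\<in>{r..s}. X (r+k) (t+k) ** Y (t+k) (s+k))"
    by (rule sum.shift_bounds_cl_nat_ivl)
  finally show "ishift k (imul X Y) r s = imul (ishift k X) (ishift k Y) r s"
    by (simp add: ishift_def imul_def)
qed

lemma ishift_iid: "ishift k iid = iid"
  by (intro ext) (simp add: ishift_def iid_def)

lemma ishift_UT: "X \<in> UT \<Longrightarrow> ishift k X \<in> UT"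
  by (simp add: UT_def ishift_def)

lemma imul_G: "X \<in> G \<Longrightarrow> Y \<in> G \<Longrightarrow> imul X Y \<in> G"
  by (simp add: G_iff_ishift imul_UT ishift_imul)

lemma iid_G: "iid \<in> G"
  by (simp add: G_iff_ishift iid_UT ishift_iid)

lemma ipow_G: "X \<in> G \<Longrightarrow> ipow X n \<in> G"
  by (induction n) (simp_all add: iid_G imul_G)

lemma G_UT: "X \<in> G \<Longrightarrow> X \<in> UT"
  by (simp add: G_def)

lemma M0_G: "M0 ds \<in> G"
proof -
  have "M0 ds \<in> UT" by (simp add: UT_def M0_def)
  moreover have "ishift 3 (M0 ds) = M0 ds"
    by (intro ext) (simp add: ishift_def M0_def)
  ultimately show ?thesis by (simp add: G_iff_ishift)
qed

function tri_inv :: "imat \<Rightarrow> imat" where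
  "tri_inv P r s = (if s < r then 0 else if s = r then mat 1
     else - (\<Sum>t\<in>{r<..s}. P r t ** tri_inv P t s))"
  by auto
termination by (relation "Wellfounded.measure (\<lambda>(P, r, s). s - r)") auto

declare tri_inv.simps [simp del]

lemma tri_inv_UT: "tri_inv P \<in> UT"
  by (simp add: UT_def tri_inv.simps)

lemma imul_tri_inv:
  assumes P: "P \<in> UT" shows "imul P (tri_inv P) = iid"
proof (intro ext)
  fix r s
  show "imul P (tri_inv P) r s = iid r s"
  proof (cases "r < s")
    case True
    then have "{r..s} = insert r {r<..s}" by auto
    then have "imul P (tri_inv P) r s = P r r ** tri_inv P r s + (\<Sum>t\<in>{r<..s}. P r t ** tri_inv P t s)"
      by (simp add: imul_def)
    also have "\<dots> = 0" using True P by (simp add: UT_def tri_inv.simps[of P r s])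
    finally show ?thesis using True by (simp add: iid_def)
  next
    case False
    then show ?thesis using P
      by (cases "r = s") (auto simp: imul_def iid_def UT_def tri_inv.simps)
  qed
qed

lemma UT_inverse_unique:
  assumes "Y \<in> UT" "Y' \<in> UT" "imul P Y = iid" "imul Y' P = iid"
  shows "Y = Y'"
proof -
  have "Y = imul (imul Y' P) Y" using assms by (simp add: imul_iid_left)
  also have "\<dots> = imul Y' (imul P Y)" by (simp add: imul_assoc)
  also have "\<dots> = Y'" using assms by (simp add: imul_iid_right)
  finally show ?thesis .
qed

lemma tri_inv_imul:
  assumes P: "P \<in> UT" shows "imul (tri_inv P) P = iid"
proof -
  let ?R = "tri_inv P"
  have "tri_inv ?R = P"
    using UT_inverse_unique[of "tri_inv ?R" P ?R] P tri_inv_UT imul_tri_inv by simp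
  then show ?thesis using imul_tri_inv[of ?R] tri_inv_UT by metis
qed

lemma iinv_inverse:
  assumes "P \<in> UT"
  shows "iinv P \<in> UT" "imul P (iinv P) = iid" "imul (iinv P) P = iid"
proof -
  have "iinv P = tri_inv P"
    unfolding iinv_def
    using assms tri_inv_UT imul_tri_inv tri_inv_imul UT_inverse_unique
    by (intro the_equality) blast+
  then show "iinv P \<in> UT" "imul P (iinv P) = iid" "imul (iinv P) P = iid"
    using assms by (simp_all add: tri_inv_UT imul_tri_inv tri_inv_imul)
qed

lemma iinv_G:
  assumes "P \<in> G" shows "iinv P \<in> G"
proof -
  have P: "P \<in> UT" "ishift 3 P = P" using assms by (auto simp: G_iff_ishift)
  let ?R = "iinv P"
  have "imul P (ishift 3 ?R) = iid"
    using iinv_inverse(2)[OF P(1)] P(2) ishift_imul[of 3 P ?R] ishift_iid by metis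
  then have "ishift 3 ?R = ?R"
    using UT_inverse_unique[of "ishift 3 ?R" ?R P] iinv_inverse[OF P(1)] ishift_UT by auto
  then show ?thesis using iinv_inverse(1)[OF P(1)] by (simp add: G_iff_ishift)
qed

section \<open>Leading diagonals\<close>

definition lead_diags :: "nat \<Rightarrow> (nat \<Rightarrow> blk) \<Rightarrow> (nat \<Rightarrow> blk) \<Rightarrow> imat \<Rightarrow> bool" where
  "lead_diags L a b X \<longleftrightarrow> (\<forall>k r. 0 < k \<and> k < L \<longrightarrow> X r (r + k) = 0)
     \<and> (\<forall>r. X r (r + L) = a r) \<and> (\<forall>r. X r (r + L + 1) = b r)"

lemma imul_lead_diags_1:
  assumes X: "X \<in> UT" and Y: "Y \<in> UT" and "lead_diags 1 a b X" "lead_diags 1 c d Y"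
    and "\<forall>r. a r + c r = e r" "\<forall>r. b r + a r ** c (Suc r) + d r = f r"
  shows "lead_diags 1 e f (imul X Y)"
proof -
  have "imul X Y r (Suc r) = X r (Suc r) + Y r (Suc r)" for r
  proof -
    have "{r..Suc r} = {r, Suc r}" by auto
    then show ?thesis using X Y by (simp add: imul_def UT_def add.commute)
  qed
  moreover have "imul X Y r (Suc (Suc r)) =
      X r (Suc (Suc r)) + X r (Suc r) ** Y (Suc r) (Suc (Suc r)) + Y r (Suc (Suc r))" for r
  proof -
    have "{r..Suc (Suc r)} = {r, Suc r, Suc (Suc r)}" by auto
    then show ?thesis using X Y by (simp add: imul_def UT_def add_ac)
  qed
  ultimately show ?thesis using assms(3-6) by (simp add: lead_diags_def)
qed

lemma iinv_lead_diags_1: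
  assumes P: "P \<in> UT" and "lead_diags 1 a b P" and "\<forall>r. b r + a r ** a (Suc r) = f r"
  shows "lead_diags 1 a f (iinv P)"
proof -
  let ?R = "iinv P"
  have "lead_diags 1 (\<lambda>r. ?R r (Suc r)) (\<lambda>r. ?R r (Suc (Suc r))) ?R"
    by (simp add: lead_diags_def)
  then have "lead_diags 1 (\<lambda>r. a r + ?R r (Suc r))
      (\<lambda>r. b r + a r ** ?R (Suc r) (Suc (Suc r)) + ?R r (Suc (Suc r))) iid"
    using imul_lead_diags_1[OF P iinv_inverse(1)[OF P] assms(2)] iinv_inverse(2)[OF P] by simp
  then have "a r + ?R r (Suc r) = 0" "b r + a r ** ?R (Suc r) (Suc (Suc r)) + ?R r (Suc (Suc r)) = 0" for r
    by (simp_all add: lead_diags_def iid_def)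
  then show ?thesis using assms(3) by (simp add: lead_diags_def blk_add_eq_0_iff)
qed

lemma imul_self_gap:
  assumes X: "X \<in> UT" and L: "0 < L" and gap: "\<forall>k r. 0 < k \<and> k < L \<longrightarrow> X r (r + k) = 0"
    and k: "0 < k"
  shows "imul X X r (r + k) = (\<Sum>t\<in>{r + L..r + k - L}. X r t ** X t (r + k))"
proof -
  have "{r..r + k} = insert r (insert (r + k) {r<..<r + k})" using k by auto
  then have "imul X X r (r + k) = X r r ** X r (r + k)
      + (X r (r + k) ** X (r + k) (r + k) + (\<Sum>t\<in>{r<..<r + k}. X r t ** X t (r + k)))"
    using k by (simp add: imul_def)
  also have "\<dots> = (\<Sum>t\<in>{r<..<r + k}. X r t ** X t (r + k))"
    \<comment> \<open>the two terms through the main diagonal cancel in characteristic 2\<close>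
    using X by (simp add: UT_def add.assoc[symmetric])
  also have "\<dots> = (\<Sum>t\<in>{r + L..r + k - L}. X r t ** X t (r + k))"
  proof (rule sum.mono_neutral_right)
    show "finite {r<..<r + k}" by simp
    show "{r + L..r + k - L} \<subseteq> {r<..<r + k}" using L by auto
    show "\<forall>t\<in>{r<..<r + k} - {r + L..r + k - L}. X r t ** X t (r + k) = 0"
    proof
      fix t assume t: "t \<in> {r<..<r + k} - {r + L..r + k - L}"
      then have "0 < t - r" "0 < r + k - t" "t - r < L \<or> r + k - t < L" by auto
      then have "X r (r + (t - r)) = 0 \<or> X t (t + (r + k - t)) = 0"
        using gap by blast
      then show "X r t ** X t (r + k) = 0" using t by auto
    qed
  qed
  finally show ?thesis .
qed

lemma lead_diags_square:
  assumes X: "X \<in> UT" and L: "0 < L" and lead: "lead_diags L a b X"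
    and "\<forall>r. a r ** a (r + L) = a' r" and "\<forall>r. a r ** b (r + L) + b r ** a (r + L + 1) = b' r"
  shows "lead_diags (2 * L) a' b' (imul X X)"
proof -
  have gap: "\<forall>k r. 0 < k \<and> k < L \<longrightarrow> X r (r + k) = 0"
    and A: "\<And>r. X r (r + L) = a r" and B: "\<And>r. X r (r + L + 1) = b r"
    using lead by (simp_all add: lead_diags_def)
  note square = imul_self_gap[OF X L gap]
  have "imul X X r (r + k) = 0" if "0 < k" "k < 2 * L" for k r
    using square[OF that(1)] that(2) by simp
  moreover have "imul X X r (r + 2 * L) = a' r" for r
  proof -
    have "{r + L..r + 2 * L - L} = {r + L}" by auto
    then show ?thesis
      using square[of "2 * L" r] L A[of r] A[of "r + L"] assms(4)[rule_format, of r]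
      by (simp add: mult_2 add.assoc)
  qed
  moreover have "imul X X r (r + 2 * L + 1) = b' r" for r
  proof -
    have "{r + L..r + 2 * L + 1 - L} = {r + L, r + L + 1}" by auto
    then show ?thesis
      using square[of "2 * L + 1" r] L A[of r] A[of "r + L + 1"] B[of r] B[of "r + L"]
        assms(5)[rule_format, of r]
      by (simp add: mult_2 add_ac)
  qed
  ultimately show ?thesis by (simp add: lead_diags_def)
qed

definition pdiag :: "nat list \<Rightarrow> nat \<Rightarrow> blk" where
  "pdiag c r = decode (c ! (r mod 3))"

lemma pdiag_add_mod: "pdiag c (r + n) = pdiag c (r + n mod 3)"
  by (simp add: pdiag_def mod_add_right_eq)

definition squares_to :: "nat \<Rightarrow> nat list \<Rightarrow> nat list \<Rightarrow> nat list \<Rightarrow> nat list \<Rightarrow> bool" where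
  "squares_to s a b a' b' \<longleftrightarrow> (\<forall>r. pdiag a r ** pdiag a (r + s) = pdiag a' r
     \<and> pdiag a r ** pdiag b (r + s) + pdiag b r ** pdiag a (r + s + 1) = pdiag b' r)"

lemma lead_diags_square_pdiag:
  assumes "X \<in> UT" "0 < L" "lead_diags L (pdiag a) (pdiag b) X" "squares_to (L mod 3) a b a' b'"
  shows "lead_diags (2 * L) (pdiag a') (pdiag b') (imul X X)"
proof (rule lead_diags_square[OF assms(1-3)])
  have "pdiag c (r + L + 1) = pdiag c (r + L mod 3 + 1)" for c r
    using pdiag_add_mod[of c "r + 1" L] by (simp add: ac_simps)
  then show "\<forall>r. pdiag a r ** pdiag a (r + L) = pdiag a' r"
    and "\<forall>r. pdiag a r ** pdiag b (r + L) + pdiag b r ** pdiag a (r + L + 1) = pdiag b' r"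
    using assms(4) by (simp_all add: squares_to_def pdiag_add_mod[of _ _ L])
qed

lemma pow2_mod3: "2 ^ n mod 3 = (if even n then 1 else 2 :: nat)"
  by (induction n) (simp_all add: mod_mult_right_eq[of 2 "2 ^ _" 3, symmetric])

lemma lead_diags_ipow_cycle:
  assumes X: "X \<in> UT" and base: "lead_diags 1 (pdiag a) (pdiag b) X"
    and sq1: "squares_to 1 a b c c'" and sq2: "squares_to 2 c c' d d'" and sq3: "squares_to 1 d d' c c'"
  shows "lead_diags (2 ^ (2 * j + 1)) (pdiag c) (pdiag c') (ipow X (2 ^ (2 * j + 1)))
       \<and> lead_diags (2 ^ (2 * j + 2)) (pdiag d) (pdiag d') (ipow X (2 ^ (2 * j + 2)))"
proof -
  have square: "lead_diags (2 * n) (pdiag e) (pdiag e') (ipow X (2 * n))"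
    if "lead_diags n (pdiag f) (pdiag f') (ipow X n)" "squares_to (n mod 3) f f' e e'" "0 < n"
    for n e e' f f'
    using lead_diags_square_pdiag[OF ipow_UT[OF X] that(3,1,2)] ipow_mult2[OF X] by simp
  show ?thesis
  proof (induction j)
    case 0
    have "lead_diags 2 (pdiag c) (pdiag c') (ipow X 2)"
      using square[of 1] base sq1 ipow_1[OF X] by simp
    then show ?case using square[of 2] sq2 by simp
  next
    case (Suc j)
    let ?n = "2 ^ (2 * j + 2) :: nat"
    have lead_n: "lead_diags ?n (pdiag d) (pdiag d') (ipow X ?n)" using Suc.IH by simp
    have "?n mod 3 = 1" using pow2_mod3[of "2 * j + 2"] by simp
    then have lead_2n: "lead_diags (2 * ?n) (pdiag c) (pdiag c') (ipow X (2 * ?n))"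
      using square[OF lead_n] sq3 by simp
    have "(2 * ?n) mod 3 = 2" using pow2_mod3[of "Suc (2 * j + 2)"] by simp
    then have "lead_diags (2 * (2 * ?n)) (pdiag d) (pdiag d') (ipow X (2 * (2 * ?n)))"
      using square[OF lead_2n] sq2 by simp
    with lead_2n show ?case by (simp add: ac_simps)
  qed
qed

lemma lead_diags_M0: "lead_diags 1 (pdiag c) (pdiag d) (M0 (c # d # ds))"
  by (simp add: lead_diags_def M0_def pdiag_def)

lemma has_form_if_lead_diags:
  assumes "X \<in> G" "0 < L" and lead: "lead_diags L (pdiag a) (pdiag b) X"
  shows "has_form (L - 1) [a, b] X"
proof -
  have "X r (r + j) = 0" if "1 \<le> j" "j \<le> L - 1" for j r
    using lead that by (simp add: lead_diags_def)
  moreover have "X r (r + (L - 1) + k + 1) = decode (([a, b] ! k) ! (r mod 3))" if "k < 2" for k r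
  proof -
    have "k = 0 \<or> k = 1" using that by auto
    then show ?thesis using lead assms(2) by (auto simp: lead_diags_def pdiag_def)
  qed
  ultimately show ?thesis using assms(1) by (simp add: has_form_def)
qed

definition blk9 :: "bit \<Rightarrow> bit \<Rightarrow> bit \<Rightarrow> bit \<Rightarrow> bit \<Rightarrow> bit \<Rightarrow> bit \<Rightarrow> bit \<Rightarrow> bit \<Rightarrow> blk" where
  "blk9 u11 u12 u13 u21 u22 u23 u31 u32 u33 =
     (\<chi> p q. [[u11, u12, u13], [u21, u22, u23], [u31, u32, u33]] ! idx3 p ! idx3 q)"

definition bit_of :: "nat \<Rightarrow> nat \<Rightarrow> bit" where
  "bit_of n k = (if odd (n div 2 ^ k) then 1 else 0)"

lemma idx3_simps: "idx3 1 = 1" "idx3 2 = 2" "idx3 3 = 0"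
  by (simp_all add: idx3_def)

lemma decode_blk9:
  "decode n = blk9 (bit_of n 8) (bit_of n 7) (bit_of n 6) (bit_of n 5) (bit_of n 4)
     (bit_of n 3) (bit_of n 2) (bit_of n 1) (bit_of n 0)"
  by (simp add: blk9_def decode_def idx3_simps bit_of_def vec_eq_iff forall_3)

lemma blk9_mult:
  "blk9 a1 a2 a3 a4 a5 a6 a7 a8 a9 ** blk9 b1 b2 b3 b4 b5 b6 b7 b8 b9 =
   blk9 (a2*b4+a3*b7+a1*b1) (a2*b5+a3*b8+a1*b2) (a2*b6+a3*b9+a1*b3)
        (a5*b4+a6*b7+a4*b1) (a5*b5+a6*b8+a4*b2) (a5*b6+a6*b9+a4*b3)
        (a8*b4+a9*b7+a7*b1) (a8*b5+a9*b8+a7*b2) (a8*b6+a9*b9+a7*b3)"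
  by (simp del: add_bit_eq_xor mult_bit_eq_and
      add: blk9_def matrix_matrix_mult_def sum_3 idx3_simps vec_eq_iff forall_3)

lemma blk9_add:
  "blk9 a1 a2 a3 a4 a5 a6 a7 a8 a9 + blk9 b1 b2 b3 b4 b5 b6 b7 b8 b9 =
   blk9 (a1+b1) (a2+b2) (a3+b3) (a4+b4) (a5+b5) (a6+b6) (a7+b7) (a8+b8) (a9+b9)"
  by (simp del: add_bit_eq_xor mult_bit_eq_and add: blk9_def idx3_simps vec_eq_iff forall_3)

lemma blk9_zero: "blk9 0 0 0 0 0 0 0 0 0 = 0"
  by (simp add: blk9_def vec_eq_iff forall_3 idx3_simps)

lemmas pdiag_eval = pdiag_def mod_Suc decode_blk9 blk9_mult blk9_add blk9_zero bit_of_def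

lemma nat_mod3_allI:
  assumes "\<And>r. r mod 3 = 0 \<Longrightarrow> P r" "\<And>r. r mod 3 = 1 \<Longrightarrow> P r" "\<And>r. r mod 3 = 2 \<Longrightarrow> P r"
  shows "\<forall>r::nat. P r"
proof
  fix r :: nat
  have "r mod 3 = 0 \<or> r mod 3 = 1 \<or> r mod 3 = 2" by arith
  then show "P r" using assms by metis
qed

section \<open>The elements \<open>x\<close> and \<open>y\<close>\<close>

lemma x_G: "x0 \<in> G" "x1 \<in> G" "x2 \<in> G"
  by (simp_all add: x0_def x1_def x2_def M0_G)

lemma x_lead_diags:
  "lead_diags 1 (pdiag [11,11,11]) (pdiag [17,17,17]) x0"
  "lead_diags 1 (pdiag [23,224,138]) (pdiag [59,136,495]) x1"
  "lead_diags 1 (pdiag [46,68,217]) (pdiag [12,194,363]) x2"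
  unfolding x0_def x1_def x2_def by (rule lead_diags_M0)+

lemma xx_G: "xx \<in> G"
  by (simp add: xx_def iinv_G imul_G x_G)

lemma yy_G: "yy \<in> G"
  by (simp add: yy_def iinv_G imul_G x_G xx_G)

lemma xx_lead_diags: "lead_diags 1 (pdiag [28,235,129]) (pdiag [29,211,263]) xx"
proof -
  have x0x1: "lead_diags 1 (pdiag [28,235,129]) (pdiag [46,138,451]) (imul x0 x1)"
    by (rule imul_lead_diags_1[OF G_UT[OF x_G(1)] G_UT[OF x_G(2)] x_lead_diags(1,2)];
        rule nat_mod3_allI; simp add: pdiag_eval)
  show ?thesis
    unfolding xx_def
    by (rule iinv_lead_diags_1[OF G_UT[OF imul_G[OF x_G(1,2)]] x0x1];
        rule nat_mod3_allI; simp add: pdiag_eval)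
qed

lemma yy_lead_diags: "lead_diags 1 (pdiag [28,235,129]) (pdiag [58,3,445]) yy"
proof -
  have x2_inv: "lead_diags 1 (pdiag [46,68,217]) (pdiag [37,129,437]) (iinv x2)"
    by (rule iinv_lead_diags_1[OF G_UT[OF x_G(3)] x_lead_diags(3)];
        rule nat_mod3_allI; simp add: pdiag_eval)
  have x2xx: "lead_diags 1 (pdiag [50,175,88]) (pdiag [23,83,400]) (imul x2 xx)"
    by (rule imul_lead_diags_1[OF G_UT[OF x_G(3)] G_UT[OF xx_G] x_lead_diags(3) xx_lead_diags];
        rule nat_mod3_allI; simp add: pdiag_eval)
  show ?thesis
    unfolding yy_def
    by (rule imul_lead_diags_1[OF G_UT[OF imul_G[OF x_G(3) xx_G]] G_UT[OF iinv_G[OF x_G(3)]] x2xx x2_inv];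
        rule nat_mod3_allI; simp add: pdiag_eval)
qed

theorem proposition4p1:
  fixes j :: nat
  shows "has_form (2 ^ (2*j+1) - 1) [[51,89,196],[0,0,0]] (ipow xx (2 ^ (2*j+1)))
       \<and> has_form (2 ^ (2*j+1) - 1) [[51,89,196],[0,157,106]] (ipow yy (2 ^ (2*j+1)))
       \<and> has_form (2 ^ (2*j+2) - 1) [[28,235,129],[0,0,0]] (ipow xx (2 ^ (2*j+2)))
       \<and> has_form (2 ^ (2*j+2) - 1) [[28,235,129],[39,208,186]] (ipow yy (2 ^ (2*j+2)))"
proof -
  have "lead_diags (2 ^ (2*j+1)) (pdiag [51,89,196]) (pdiag [0,0,0]) (ipow xx (2 ^ (2*j+1)))
      \<and> lead_diags (2 ^ (2*j+2)) (pdiag [28,235,129]) (pdiag [0,0,0]) (ipow xx (2 ^ (2*j+2)))"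
    by (rule lead_diags_ipow_cycle[OF G_UT[OF xx_G] xx_lead_diags];
        unfold squares_to_def; rule nat_mod3_allI; simp add: pdiag_eval)
  moreover have
    "lead_diags (2 ^ (2*j+1)) (pdiag [51,89,196]) (pdiag [0,157,106]) (ipow yy (2 ^ (2*j+1)))
      \<and> lead_diags (2 ^ (2*j+2)) (pdiag [28,235,129]) (pdiag [39,208,186]) (ipow yy (2 ^ (2*j+2)))"
    by (rule lead_diags_ipow_cycle[OF G_UT[OF yy_G] yy_lead_diags];
        unfold squares_to_def; rule nat_mod3_allI; simp add: pdiag_eval)
  ultimately show ?thesis
    using has_form_if_lead_diags[OF ipow_G[OF xx_G]] has_form_if_lead_diags[OF ipow_G[OF yy_G]]
    by simp
qed

end
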